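(* Let $Q$ be a groupoid quantale with base locale $A$ and let $X$ be a stably supported $Q$-module with support $\varsigma_X:X\to A$. Then the map $A\to X$, $a\mapsto a\triangleright1_X$, is right adjoint to $\varsigma_X$. In particular $\varsigma_X$ preserves arbitrary joins, and the support of $X$ is unique.
   Context: Let $A$ be a locale. An involutive $A$-$A$-quantale $Q$ is a sup-lattice with commuting unital left and right $A$-actions $a\triangleright q$, $q\triangleleft a$, an associative join-preserving multiplication compatible with them ($(a\triangleright x)y=a\triangleright(xy)$, $(x\triangleleft a)y=x(a\triangleright y)$, $(xy)\triangleleft a=x(y\triangleleft a)$), and a join-preserving involution with $x^{**}=x$, $(xy)^*=y^*x^*$, $(a\triangleright x\triangleleft b)^*=b\triangleright x^*\triangleleft a$. A support is a sup-lattice homomorphism $\varsigma_Q:Q\to A$ with $\varsigma_Q(1_Q)=1_A$, $\varsigma_Q(x)\triangleright y\le xx^*y$, $\varsigma_Q(x)\triangleright x=x$; equivariant if $\varsigma_Q(a\triangleright x)=a\wedge\varsigma_Q(x)$. A groupoid quantale is such a $Q$ which is a frame with $(a\triangleright q)\wedge m=a\triangleright(q\wedge m)$, $m\wedge(q\triangleleft a)=(q\wedge m)\triangleleft a$, with an equivariant support and a frame homomorphism $\upsilon:Q\to A$ with $\upsilon(a\triangleright1_Q)=a=\upsilon(1_Q\triangleleft a)$, such that the right adjoint of $Q\otimes_AQ\to Q$ preserves joins, $\bigvee_{xy\le a}\upsilon(x)\triangleright y=a$ and $\upsilon(a)\triangleright1_Q=\bigvee_{xx^*\le a}x$. A $Q$-module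 is a locale $X$ with a left $Q$-module action $q\cdot x$ and a unital left $A$-module structure $a\triangleright x$ with $(a\triangleright q)\cdot x=a\triangleright(q\cdot x)$, $(q\triangleleft a)\cdot x=q\cdot(a\triangleright x)$, $a\triangleright(x\wedge y)=(a\triangleright x)\wedge y$. A pre-Hilbert $Q$-module has $\langle-,-\rangle:X\times X\to Q$ with $\langle q\cdot x,y\rangle=q\langle x,y\rangle$, $a\triangleright\langle x,1_X\rangle=\langle a\triangleright x,1_X\rangle$, $\langle\bigvee x_\alpha,y\rangle=\bigvee\langle x_\alpha,y\rangle$, $\langle x,y\rangle=\langle y,x\rangle^*$. A support on it is a monotone $\varsigma_X:X\to A$ with $\varsigma_X(1_X)=1_A$, $\varsigma_X(x)\triangleright1_X\le\langle x,x\rangle\cdot1_X$, $\varsigma_X(x)\triangleright x=x$; it is stable if $\varsigma_X(q\cdot x)\le\varsigma_Q(q)$ for all $q,x$. *)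

theory Defs
  imports Main
begin

text \<open>Locales and sup-lattices are modelled as types of class complete_lattice;
  a locale (frame) additionally satisfies the frame distributive law.\<close>

definition frame_law :: "('a::complete_lattice) itself \<Rightarrow> bool" where
  "frame_law _ \<longleftrightarrow> (\<forall>(a::'a) S. inf a (Sup S) = (SUP s\<in>S. inf a s))"

definition sl_hom :: "('a::complete_lattice \<Rightarrow> 'b::complete_lattice) \<Rightarrow> bool" where
  "sl_hom f \<longleftrightarrow> (\<forall>S. f (Sup S) = (SUP s\<in>S. f s))"

definition frame_hom :: "('a::complete_lattice \<Rightarrow> 'b::complete_lattice) \<Rightarrow> bool" where
  "frame_hom f \<longleftrightarrow> sl_hom f \<and> f top = top \<and> (\<forall>x y. f (inf x y) = inf (f x) (f y))"

definition left_A_module :: "('a::complete_lattice \<Rightarrow> 'm::complete_lattice \<Rightarrow> 'm) \<Rightarrow> bool" where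
  "left_A_module act \<longleftrightarrow>
     (\<forall>a S. act a (Sup S) = (SUP m\<in>S. act a m)) \<and>
     (\<forall>S m. act (Sup S) m = (SUP a\<in>S. act a m)) \<and>
     (\<forall>m. act top m = m) \<and>
     (\<forall>a b m. act a (act b m) = act (inf a b) m)"

definition right_A_module :: "('m::complete_lattice \<Rightarrow> 'a::complete_lattice \<Rightarrow> 'm) \<Rightarrow> bool" where
  "right_A_module act \<longleftrightarrow>
     (\<forall>a S. act (Sup S) a = (SUP m\<in>S. act m a)) \<and>
     (\<forall>S m. act m (Sup S) = (SUP a\<in>S. act m a)) \<and>
     (\<forall>m. act m top = m) \<and>
     (\<forall>a b m. act (act m a) b = act m (inf a b))"

text \<open>Involutive A-A-quantale (actl a q = a |> q, actr q a = q <| a).\<close>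
definition inv_AA_quantale ::
  "('a::complete_lattice \<Rightarrow> 'q::complete_lattice \<Rightarrow> 'q) \<Rightarrow> ('q \<Rightarrow> 'a \<Rightarrow> 'q)
   \<Rightarrow> ('q \<Rightarrow> 'q \<Rightarrow> 'q) \<Rightarrow> ('q \<Rightarrow> 'q) \<Rightarrow> bool" where
  "inv_AA_quantale actl actr mult involQ \<longleftrightarrow>
     frame_law TYPE('a) \<and>
     left_A_module actl \<and> right_A_module actr \<and>
     (\<forall>a q b. actr (actl a q) b = actl a (actr q b)) \<and>
     (\<forall>x y z. mult (mult x y) z = mult x (mult y z)) \<and>
     (\<forall>x S. mult x (Sup S) = (SUP y\<in>S. mult x y)) \<and>
     (\<forall>S y. mult (Sup S) y = (SUP x\<in>S. mult x y)) \<and>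
     (\<forall>a x y. mult (actl a x) y = actl a (mult x y)) \<and>
     (\<forall>a x y. mult (actr x a) y = mult x (actl a y)) \<and>
     (\<forall>a x y. actr (mult x y) a = mult x (actr y a)) \<and>
     (\<forall>S. involQ (Sup S) = (SUP x\<in>S. involQ x)) \<and>
     (\<forall>x. involQ (involQ x) = x) \<and>
     (\<forall>x y. involQ (mult x y) = mult (involQ y) (involQ x)) \<and>
     (\<forall>a x b. involQ (actr (actl a x) b) = actr (actl b (involQ x)) a)"

definition Q_support ::
  "('a::complete_lattice \<Rightarrow> 'q::complete_lattice \<Rightarrow> 'q) \<Rightarrow> ('q \<Rightarrow> 'q \<Rightarrow> 'q) \<Rightarrow> ('q \<Rightarrow> 'q)
   \<Rightarrow> ('q \<Rightarrow> 'a) \<Rightarrow> bool" where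
  "Q_support actl mult involQ suppQ \<longleftrightarrow>
     sl_hom suppQ \<and> suppQ top = top \<and>
     (\<forall>x y. actl (suppQ x) y \<le> mult (mult x (involQ x)) y) \<and>
     (\<forall>x. actl (suppQ x) x = x)"

definition equivariant_support ::
  "('a::complete_lattice \<Rightarrow> 'q::complete_lattice \<Rightarrow> 'q) \<Rightarrow> ('q \<Rightarrow> 'a) \<Rightarrow> bool" where
  "equivariant_support actl suppQ \<longleftrightarrow> (\<forall>a x. suppQ (actl a x) = inf a (suppQ x))"

text \<open>Elements of the tensor product Q \<otimes>_A Q, represented (as usual) by the
  subsets of Q \<times> Q that are down-closed, closed under joins in each variable and
  A-balanced; ordered by inclusion.\<close>
definition tensor_elem ::
  "('a::complete_lattice \<Rightarrow> 'q::complete_lattice \<Rightarrow> 'q) \<Rightarrow> ('q \<Rightarrow> 'a \<Rightarrow> 'q) \<Rightarrow> ('q \<times> 'q) set \<Rightarrow> bool" where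
  "tensor_elem actl actr I \<longleftrightarrow>
     (\<forall>x y x' y'. (x, y) \<in> I \<and> x' \<le> x \<and> y' \<le> y \<longrightarrow> (x', y') \<in> I) \<and>
     (\<forall>S y. (\<forall>x\<in>S. (x, y) \<in> I) \<longrightarrow> (Sup S, y) \<in> I) \<and>
     (\<forall>x S. (\<forall>y\<in>S. (x, y) \<in> I) \<longrightarrow> (x, Sup S) \<in> I) \<and>
     (\<forall>x a y. (actr x a, y) \<in> I \<longleftrightarrow> (x, actl a y) \<in> I)"

definition tensor_join ::
  "('a::complete_lattice \<Rightarrow> 'q::complete_lattice \<Rightarrow> 'q) \<Rightarrow> ('q \<Rightarrow> 'a \<Rightarrow> 'q)
   \<Rightarrow> ('q \<times> 'q) set set \<Rightarrow> ('q \<times> 'q) set" where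
  "tensor_join actl actr F = \<Inter>{I. tensor_elem actl actr I \<and> \<Union>F \<subseteq> I}"

text \<open>The multiplication Q \<otimes>_A Q \<rightarrow> Q sends I to the join of all x y with (x,y) in I;
  its right adjoint sends q to the set of pairs with x y \<le> q.\<close>
definition mult_radj :: "('q::complete_lattice \<Rightarrow> 'q \<Rightarrow> 'q) \<Rightarrow> 'q \<Rightarrow> ('q \<times> 'q) set" where
  "mult_radj mult q = {(x, y). mult x y \<le> q}"

definition groupoid_quantale ::
  "('a::complete_lattice \<Rightarrow> 'q::complete_lattice \<Rightarrow> 'q) \<Rightarrow> ('q \<Rightarrow> 'a \<Rightarrow> 'q)
   \<Rightarrow> ('q \<Rightarrow> 'q \<Rightarrow> 'q) \<Rightarrow> ('q \<Rightarrow> 'q) \<Rightarrow> ('q \<Rightarrow> 'a) \<Rightarrow> ('q \<Rightarrow> 'a) \<Rightarrow> bool" where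
  "groupoid_quantale actl actr mult involQ suppQ ups \<longleftrightarrow>
     inv_AA_quantale actl actr mult involQ \<and>
     frame_law TYPE('q) \<and>
     (\<forall>a q m. inf (actl a q) m = actl a (inf q m)) \<and>
     (\<forall>a q m. inf m (actr q a) = actr (inf q m) a) \<and>
     Q_support actl mult involQ suppQ \<and> equivariant_support actl suppQ \<and>
     frame_hom ups \<and>
     (\<forall>a. ups (actl a top) = a \<and> ups (actr top a) = a) \<and>
     (\<forall>S. mult_radj mult (Sup S) = tensor_join actl actr (mult_radj mult ` S)) \<and>
     (\<forall>a. Sup {actl (ups x) y | x y. mult x y \<le> a} = a) \<and>
     (\<forall>a. actl (ups a) top = Sup {x. mult x (involQ x) \<le> a})"

definition Q_module ::
  "('a::complete_lattice \<Rightarrow> 'q::complete_lattice \<Rightarrow> 'q) \<Rightarrow> ('q \<Rightarrow> 'a \<Rightarrow> 'q) \<Rightarrow> ('q \<Rightarrow> 'q \<Rightarrow> 'q)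
   \<Rightarrow> ('q \<Rightarrow> 'x::complete_lattice \<Rightarrow> 'x) \<Rightarrow> ('a \<Rightarrow> 'x \<Rightarrow> 'x) \<Rightarrow> bool" where
  "Q_module actl actr mult act actX \<longleftrightarrow>
     frame_law TYPE('x) \<and>
     (\<forall>q S. act q (Sup S) = (SUP x\<in>S. act q x)) \<and>
     (\<forall>S x. act (Sup S) x = (SUP q\<in>S. act q x)) \<and>
     (\<forall>p q x. act (mult p q) x = act p (act q x)) \<and>
     left_A_module actX \<and>
     (\<forall>a q x. act (actl a q) x = actX a (act q x)) \<and>
     (\<forall>a q x. act (actr q a) x = act q (actX a x)) \<and>
     (\<forall>a x y. actX a (inf x y) = inf (actX a x) y)"

definition pre_Hilbert ::
  "('q::complete_lattice \<Rightarrow> 'q \<Rightarrow> 'q) \<Rightarrow> ('q \<Rightarrow> 'q) \<Rightarrow> ('a::complete_lattice \<Rightarrow> 'q \<Rightarrow> 'q)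
   \<Rightarrow> ('q \<Rightarrow> 'x::complete_lattice \<Rightarrow> 'x) \<Rightarrow> ('a \<Rightarrow> 'x \<Rightarrow> 'x) \<Rightarrow> ('x \<Rightarrow> 'x \<Rightarrow> 'q) \<Rightarrow> bool" where
  "pre_Hilbert mult involQ actl act actX inner \<longleftrightarrow>
     (\<forall>q x y. inner (act q x) y = mult q (inner x y)) \<and>
     (\<forall>a x. actl a (inner x top) = inner (actX a x) top) \<and>
     (\<forall>S y. inner (Sup S) y = (SUP x\<in>S. inner x y)) \<and>
     (\<forall>x y. inner x y = involQ (inner y x))"

definition X_support ::
  "('q::complete_lattice \<Rightarrow> 'x::complete_lattice \<Rightarrow> 'x) \<Rightarrow> ('a::complete_lattice \<Rightarrow> 'x \<Rightarrow> 'x)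
   \<Rightarrow> ('x \<Rightarrow> 'x \<Rightarrow> 'q) \<Rightarrow> ('x \<Rightarrow> 'a) \<Rightarrow> bool" where
  "X_support act actX inner suppX \<longleftrightarrow>
     mono suppX \<and> suppX top = top \<and>
     (\<forall>x. actX (suppX x) top \<le> act (inner x x) top) \<and>
     (\<forall>x. actX (suppX x) x = x)"

definition stable_support ::
  "('q::complete_lattice \<Rightarrow> 'x::complete_lattice \<Rightarrow> 'x) \<Rightarrow> ('q \<Rightarrow> 'a::complete_lattice)
   \<Rightarrow> ('x \<Rightarrow> 'a) \<Rightarrow> bool" where
  "stable_support act suppQ suppX \<longleftrightarrow> (\<forall>q x. suppX (act q x) \<le> suppQ q)"

end

theory Submission
  imports Defs
begin

text \<open>From \<open>1\<^sub>X = \<varsigma>\<^sub>X 1\<^sub>X \<triangleright> 1\<^sub>X \<le> \<langle>1\<^sub>X, 1\<^sub>X\<rangle> \<cdot> 1\<^sub>X\<close> we get \<open>1\<^sub>Q \<cdot> 1\<^sub>X = 1\<^sub>X\<close>, hence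
  \<open>a \<triangleright> 1\<^sub>X = (a \<triangleright> 1\<^sub>Q) \<cdot> 1\<^sub>X\<close>, and stability with equivariance gives
  \<open>\<varsigma>\<^sub>X (a \<triangleright> 1\<^sub>X) \<le> \<varsigma>\<^sub>Q (a \<triangleright> 1\<^sub>Q) = a\<close>; conversely \<open>x = \<varsigma>\<^sub>X x \<triangleright> x \<le> \<varsigma>\<^sub>X x \<triangleright> 1\<^sub>X\<close>.
  With monotonicity these are the counit and unit of the adjunction; join preservation
  and uniqueness are general facts about left adjoints.\<close>

lemma sl_hom_mono:
  assumes "sl_hom f"
  shows "mono f"
proof
  fix x y :: 'a
  assume "x \<le> y"
  then have "f y = f (Sup {x, y})" by (simp add: sup_absorb2)
  also have "\<dots> = sup (f x) (f y)" using assms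
    unfolding sl_hom_def by (metis image_insert image_empty Sup_insert Sup_empty sup_bot_right)
  finally show "f x \<le> f y" by (metis sup_ge1)
qed

lemma left_A_module_mono:
  assumes "left_A_module actX" and "a \<le> b" and "x \<le> y"
  shows "actX a x \<le> actX b y"
proof -
  have "sl_hom (actX a)" "sl_hom (\<lambda>c. actX c y)"
    using assms(1) by (simp_all add: left_A_module_def sl_hom_def)
  then have "actX a x \<le> actX a y" "actX a y \<le> actX b y"
    using assms(2,3) sl_hom_mono by (auto dest: monoD)
  then show ?thesis by (rule order_trans)
qed

lemma left_adjoint_preserves_Sup:
  fixes f :: "'a::complete_lattice \<Rightarrow> 'b::complete_lattice"
  assumes adj: "\<And>x a. f x \<le> a \<longleftrightarrow> x \<le> g a"
  shows "f (Sup S) = (SUP x\<in>S. f x)"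
proof (rule antisym)
  show "f (Sup S) \<le> (SUP x\<in>S. f x)"
    unfolding adj by (rule Sup_least) (metis adj SUP_upper)
  show "(SUP x\<in>S. f x) \<le> f (Sup S)"
    by (rule SUP_least) (metis adj Sup_upper order_trans order_refl)
qed

lemma left_adjoint_unique:
  fixes f f' :: "'a::order \<Rightarrow> 'b::order"
  assumes "\<And>x a. f x \<le> a \<longleftrightarrow> x \<le> g a" and "\<And>x a. f' x \<le> a \<longleftrightarrow> x \<le> g a"
  shows "f' = f"
proof
  fix x
  show "f' x = f x" using assms[of x] by (metis antisym order_refl)
qed

lemma X_support_act_top_top:
  assumes "Q_module actl actr mult act actX" and "X_support act actX inner suppX"
  shows "act top top = top"
proof -
  have "sl_hom (\<lambda>q. act q top)" using assms(1) by (simp add: Q_module_def sl_hom_def)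
  then have act_mono: "act p top \<le> act q top" if "p \<le> q" for p q
    using that sl_hom_mono by (auto dest: monoD)
  have "top = actX (suppX top) top"
    using assms by (simp add: X_support_def Q_module_def left_A_module_def)
  also have "\<dots> \<le> act (inner top top) top" using assms(2) unfolding X_support_def by blast
  also have "\<dots> \<le> act top top" by (rule act_mono) simp
  finally show ?thesis by (simp add: top_le)
qed

lemma stable_support_actX_top_le:
  assumes "equivariant_support actl suppQ" and "suppQ top = top"
    and "Q_module actl actr mult act actX" and "X_support act actX inner suppX"
    and "stable_support act suppQ suppX"
  shows "suppX (actX a top) \<le> a"
proof -
  have "actX a top = act (actl a top) top"
    using assms(3) X_support_act_top_top[OF assms(3,4)] by (simp add: Q_module_def)
  then have "suppX (actX a top) \<le> suppQ (actl a top)"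
    using assms(5) by (simp add: stable_support_def)
  also have "\<dots> = a" using assms(1,2) by (simp add: equivariant_support_def)
  finally show ?thesis .
qed

lemma stable_support_le_iff:
  assumes "equivariant_support actl suppQ" and "suppQ top = top"
    and M: "Q_module actl actr mult act actX" and S: "X_support act actX inner suppX"
    and "stable_support act suppQ suppX"
  shows "suppX x \<le> a \<longleftrightarrow> x \<le> actX a top"
proof
  assume "suppX x \<le> a"
  then have "actX (suppX x) x \<le> actX a top"
    using M by (simp add: Q_module_def left_A_module_mono)
  then show "x \<le> actX a top" using S by (simp add: X_support_def)
next
  assume "x \<le> actX a top"
  then have "suppX x \<le> suppX (actX a top)" using S by (simp add: X_support_def monoD)
  also have "\<dots> \<le> a" using stable_support_actX_top_le assms .
  finally show "suppX x \<le> a" .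
qed

theorem lemma4p3:
  fixes actl :: "'a::complete_lattice \<Rightarrow> 'q::complete_lattice \<Rightarrow> 'q"
    and actr :: "'q \<Rightarrow> 'a \<Rightarrow> 'q"
    and mult :: "'q \<Rightarrow> 'q \<Rightarrow> 'q"
    and involQ :: "'q \<Rightarrow> 'q"
    and suppQ :: "'q \<Rightarrow> 'a"
    and ups :: "'q \<Rightarrow> 'a"
    and act :: "'q \<Rightarrow> 'x::complete_lattice \<Rightarrow> 'x"
    and actX :: "'a \<Rightarrow> 'x \<Rightarrow> 'x"
    and inner :: "'x \<Rightarrow> 'x \<Rightarrow> 'q"
    and suppX :: "'x \<Rightarrow> 'a"
  assumes "groupoid_quantale actl actr mult involQ suppQ ups"
    and "Q_module actl actr mult act actX"
    and "pre_Hilbert mult involQ actl act actX inner"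
    and "X_support act actX inner suppX"
    and "stable_support act suppQ suppX"
  shows "(\<forall>a x. suppX x \<le> a \<longleftrightarrow> x \<le> actX a top)
    \<and> (\<forall>S. suppX (Sup S) = (SUP x\<in>S. suppX x))
    \<and> (\<forall>inner' suppX'. pre_Hilbert mult involQ actl act actX inner'
          \<and> X_support act actX inner' suppX' \<and> stable_support act suppQ suppX'
          \<longrightarrow> suppX' = suppX)"
proof -
  have equiv: "equivariant_support actl suppQ" and top: "suppQ top = top"
    using assms(1) by (simp_all add: groupoid_quantale_def Q_support_def)
  note adj = stable_support_le_iff[OF equiv top assms(2)]
  have "suppX' = suppX"
    if "X_support act actX inner' suppX'" and "stable_support act suppQ suppX'" for inner' suppX'
    by (rule left_adjoint_unique[OF adj[OF assms(4,5)] adj[OF that]])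
  then show ?thesis
    using adj[OF assms(4,5)] left_adjoint_preserves_Sup[OF adj[OF assms(4,5)]] by blast
qed

end
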